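(* Let $\delta\ge1$ and let $f_{\text{in}}$ be a (possibly randomized, cardinal or ordinal) voting rule such that for every single-electorate instance (any nonempty finite set of agents with unit-sum valuations over $A$) we have $\max_{a\in A}\mathrm{SW}(a)\le \delta\cdot\mathbb{E}[\mathrm{SW}(f_{\text{in}})]$. Let $M$ be the distributed mechanism Uniform-of-$f_{\text{in}}$: each district $d$ selects its representative $a_d$ by applying $f_{\text{in}}$ to the agents of $N_d$, and the winner is $a_d$ for a district $d$ chosen uniformly at random from $D$. Then for every instance with $k$ districts (of arbitrary, possibly unequal, sizes), $\max_{a\in A}\mathrm{SW}(a)\le k\delta\cdot\mathbb{E}[\mathrm{SW}(M)]$; that is, the distortion of $M$ is at most $k\delta$. *)

theory Defs
  imports "HOL-Probability.Probability"
begin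

text \<open>Alternatives form a finite type 'a (the set A is UNIV). Agents have type 'i.
  A valuation profile v assigns to agent i and alternative a the value v i a.\<close>

definition unit_sum :: "'i set \<Rightarrow> ('i \<Rightarrow> 'a::finite \<Rightarrow> real) \<Rightarrow> bool" where
  "unit_sum N v \<longleftrightarrow> (\<forall>i\<in>N. (\<forall>a. v i a \<ge> 0) \<and> (\<Sum>a\<in>UNIV. v i a) = 1)"

definition SW :: "'i set \<Rightarrow> ('i \<Rightarrow> 'a \<Rightarrow> real) \<Rightarrow> 'a \<Rightarrow> real" where
  "SW N v a = (\<Sum>i\<in>N. v i a)"

text \<open>A (randomized) voting rule maps an electorate and a valuation profile to a
  distribution over alternatives (ordinal rules are the special case depending only on rankings).\<close>
type_synonym ('i, 'a) rule = "'i set \<Rightarrow> ('i \<Rightarrow> 'a \<Rightarrow> real) \<Rightarrow> 'a pmf"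

definition uniform_of :: "('i, 'a) rule \<Rightarrow> 'd set \<Rightarrow> ('d \<Rightarrow> 'i set) \<Rightarrow> ('i \<Rightarrow> 'a \<Rightarrow> real) \<Rightarrow> 'a pmf" where
  "uniform_of f D Nd v = bind_pmf (pmf_of_set D) (\<lambda>d. f (Nd d) v)"

end

theory Submission
  imports Defs
begin

text \<open>The optimal welfare splits as the sum of the district optima of the same alternative,
  each of which is at most \<open>\<delta>\<close> times the expected district welfare of that district's
  representative. District welfare only undercounts global welfare, and the uniform choice of
  a district makes the expected global welfare of the winner the average of these
  \<open>card D\<close> expectations.\<close>

lemma expectation_pmf_finite_type:
  "measure_pmf.expectation (p :: 'a::finite pmf) g = (\<Sum>a\<in>UNIV. g a * pmf p a)"
  by (rule integral_measure_pmf_real) auto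

lemma expectation_pmf_mono_finite_type:
  fixes g h :: "'a::finite \<Rightarrow> real"
  assumes "\<And>a. g a \<le> h a"
  shows "measure_pmf.expectation p g \<le> measure_pmf.expectation p h"
  unfolding expectation_pmf_finite_type
  using assms by (intro sum_mono mult_right_mono) auto

lemma expectation_bind_pmf_of_set:
  fixes g :: "'a::finite \<Rightarrow> real"
  assumes "finite D" "D \<noteq> {}"
  shows "measure_pmf.expectation (bind_pmf (pmf_of_set D) F) g
           = (\<Sum>d\<in>D. measure_pmf.expectation (F d) g) / card D"
proof -
  have "measure_pmf.expectation (bind_pmf (pmf_of_set D) F) g
      = (\<Sum>a\<in>UNIV. \<Sum>d\<in>D. g a * pmf (F d) a) / card D"
    using assms
    by (simp add: expectation_pmf_finite_type pmf_bind integral_pmf_of_set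
        sum_distrib_left sum_divide_distrib)
  also have "\<dots> = (\<Sum>d\<in>D. \<Sum>a\<in>UNIV. g a * pmf (F d) a) / card D"
    by (subst sum.swap) simp
  finally show ?thesis
    by (simp add: expectation_pmf_finite_type)
qed

lemma expectation_uniform_of:
  fixes g :: "'a::finite \<Rightarrow> real"
  assumes "finite D" "D \<noteq> {}"
  shows "measure_pmf.expectation (uniform_of f D Nd v) g
           = (\<Sum>d\<in>D. measure_pmf.expectation (f (Nd d) v) g) / card D"
  unfolding uniform_of_def using assms by (rule expectation_bind_pmf_of_set)

lemma unit_sum_subset: "unit_sum N v \<Longrightarrow> N' \<subseteq> N \<Longrightarrow> unit_sum N' v"
  unfolding unit_sum_def by blast

lemma SW_UNION_disjoint:
  assumes "finite D" "\<And>d. d \<in> D \<Longrightarrow> finite (Nd d)"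
    and "\<And>d d'. d \<in> D \<Longrightarrow> d' \<in> D \<Longrightarrow> d \<noteq> d' \<Longrightarrow> Nd d \<inter> Nd d' = {}"
  shows "SW (\<Union>d\<in>D. Nd d) v a = (\<Sum>d\<in>D. SW (Nd d) v a)"
  unfolding SW_def using assms by (intro sum.UNION_disjoint) auto

lemma SW_mono_electorate:
  assumes "finite N" "N' \<subseteq> N" "unit_sum N v"
  shows "SW N' v a \<le> SW N v a"
  unfolding SW_def using assms by (intro sum_mono2) (auto simp: unit_sum_def)

lemma SW_le_Max: "SW N v (a :: 'a::finite) \<le> Max (range (SW N v))"
  by (rule Max_ge) auto

lemma Max_SW_attained:
  obtains a :: "'a::finite" where "Max (range (SW N v)) = SW N v a"
proof -
  have "Max (range (SW N v)) \<in> range (SW N v)" by (rule Max_in) auto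
  then show thesis using that by (auto simp: image_iff)
qed

theorem theorem4:
  fixes f :: "('i, 'a::finite) rule" and \<delta> :: real
    and D :: "'d set" and Nd :: "'d \<Rightarrow> 'i set" and v :: "'i \<Rightarrow> 'a \<Rightarrow> real"
  assumes delta: "\<delta> \<ge> 1"
    and f_dist: "\<And>N w. finite N \<Longrightarrow> N \<noteq> {} \<Longrightarrow> unit_sum N w \<Longrightarrow>
        Max (range (SW N w)) \<le> \<delta> * measure_pmf.expectation (f N w) (SW N w)"
    and D_fin: "finite D" and D_ne: "D \<noteq> {}"
    and Nd_fin: "\<And>d. d \<in> D \<Longrightarrow> finite (Nd d)"
    and Nd_ne: "\<And>d. d \<in> D \<Longrightarrow> Nd d \<noteq> {}"
    and Nd_disj: "\<And>d d'. d \<in> D \<Longrightarrow> d' \<in> D \<Longrightarrow> d \<noteq> d' \<Longrightarrow> Nd d \<inter> Nd d' = {}"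
    and v_unit: "unit_sum (\<Union>d\<in>D. Nd d) v"
  shows "Max (range (SW (\<Union>d\<in>D. Nd d) v))
         \<le> real (card D) * \<delta> * measure_pmf.expectation (uniform_of f D Nd v) (SW (\<Union>d\<in>D. Nd d) v)"
proof -
  define N where "N = (\<Union>d\<in>D. Nd d)"
  have N_fin: "finite N" and Nd_sub: "\<And>d. d \<in> D \<Longrightarrow> Nd d \<subseteq> N"
    unfolding N_def using D_fin Nd_fin by auto
  obtain a where "Max (range (SW N v)) = SW N v a" by (rule Max_SW_attained)
  also have "\<dots> = (\<Sum>d\<in>D. SW (Nd d) v a)"
    unfolding N_def using D_fin Nd_fin Nd_disj by (rule SW_UNION_disjoint)
  also have "\<dots> \<le> (\<Sum>d\<in>D. \<delta> * measure_pmf.expectation (f (Nd d) v) (SW (Nd d) v))"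
  proof (rule sum_mono)
    fix d assume "d \<in> D"
    then have "Max (range (SW (Nd d) v)) \<le> \<delta> * measure_pmf.expectation (f (Nd d) v) (SW (Nd d) v)"
      using Nd_fin Nd_ne unit_sum_subset[OF v_unit[folded N_def] Nd_sub] by (intro f_dist)
    with SW_le_Max show "SW (Nd d) v a \<le> \<dots>" by (rule order_trans)
  qed
  also have "\<dots> \<le> (\<Sum>d\<in>D. \<delta> * measure_pmf.expectation (f (Nd d) v) (SW N v))"
    using delta SW_mono_electorate[OF N_fin Nd_sub v_unit[folded N_def]]
    by (intro sum_mono mult_left_mono expectation_pmf_mono_finite_type) auto
  also have "\<dots> = real (card D) * \<delta> * measure_pmf.expectation (uniform_of f D Nd v) (SW N v)"
    using D_fin D_ne by (simp add: expectation_uniform_of sum_distrib_left[symmetric])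
  finally show ?thesis unfolding N_def .
qed

end
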